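(* Let $x^*\in\mathbb{R}^n$ satisfy $Ax^*=b$, and let $x\in\mathbb{R}^n$ with $P(x)\neq x$. Then the function $s\mapsto\|(1-s)x+sP(x)-x^*\|^2$ on $\mathbb{R}$ has a unique minimizer \[s^*=\frac12+\frac{\|r(x)\|^2}{2\|P(x)-x\|^2},\] and \[\|x-x^*\|^2-\|(1-s^* )x+s^*P(x)-x^*\|^2=\frac{(\|r(x)\|^2+\|P(x)-x\|^2)^2}{4\|P(x)-x\|^2}.\]
   Context: Let $A=(a_1,\ldots,a_m)^T\in\mathbb{R}^{m\times n}$ with rows $a_j\in\mathbb{R}^n\setminus\{0\}$, and let $b\in\mathbb{R}^m$ lie in the range of $A$. Norms are Euclidean. For $j=1,\ldots,m$ define the projectors $P_j:\mathbb{R}^n\to\mathbb{R}^n$, $P_j(x)=\big(I-\frac{a_ja_j^T}{\|a_j\|^2}\big)x+\frac{b_j}{\|a_j\|^2}a_j$ (the orthogonal projection onto $\{z:a_j^Tz=b_j\}$), and the Kaczmarz cycle $P=P_m\circ\cdots\circ P_1$. The residual $r:\mathbb{R}^n\to\mathbb{R}^m$ is defined by $r_1(x)=(a_1^Tx-b_1)/\|a_1\|$ and $r_j(x)=(a_j^T(P_{j-1}\circ\cdots\circ P_1)(x)-b_j)/\|a_j\|$ for $j=2,\ldots,m$. *)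

theory Defs
  imports "HOL-Analysis.Analysis"
begin

text \<open>Rows of A are a 0, ..., a (m-1) (0-indexed), right-hand side b 0, ..., b (m-1).
Vectors live in real^'n (n = CARD('n)).\<close>

definition kproj :: "(nat \<Rightarrow> real^'n) \<Rightarrow> (nat \<Rightarrow> real) \<Rightarrow> nat \<Rightarrow> real^'n \<Rightarrow> real^'n" where
  "kproj a b j x = (x - ((a j \<bullet> x) / (norm (a j))^2) *\<^sub>R a j) + (b j / (norm (a j))^2) *\<^sub>R a j"

text \<open>kcycle a b k = P_k o ... o P_1 (in 1-indexed notation), kcycle a b 0 = id.\<close>
primrec kcycle :: "(nat \<Rightarrow> real^'n) \<Rightarrow> (nat \<Rightarrow> real) \<Rightarrow> nat \<Rightarrow> real^'n \<Rightarrow> real^'n" where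
  "kcycle a b 0 x = x"
| "kcycle a b (Suc k) x = kproj a b k (kcycle a b k x)"

text \<open>Residual component j (0-indexed), i.e. r_{j+1} in the paper.\<close>
definition kres :: "(nat \<Rightarrow> real^'n) \<Rightarrow> (nat \<Rightarrow> real) \<Rightarrow> nat \<Rightarrow> real^'n \<Rightarrow> real" where
  "kres a b j x = (a j \<bullet> kcycle a b j x - b j) / norm (a j)"

definition kres_norm2 :: "(nat \<Rightarrow> real^'n) \<Rightarrow> (nat \<Rightarrow> real) \<Rightarrow> nat \<Rightarrow> real^'n \<Rightarrow> real" where
  "kres_norm2 a b m x = (\<Sum>j<m. (kres a b j x)^2)"

end

theory Submission
  imports Defs
begin

text \<open>Each projection removes from the squared distance to a common solution exactly the squared
  residual of its row (Pythagoras), so a full cycle removes the squared norm of r(x). Writing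
  e = x - x* and d = P(x) - x, this fixes the inner product e\<bullet>d, and the objective becomes the
  explicit parabola in s, whose vertex and depth give the claim.\<close>

lemma kproj_eq: "kproj a b j y = y - ((a j \<bullet> y - b j) / (norm (a j))^2) *\<^sub>R a j"
  unfolding kproj_def by (simp add: diff_divide_distrib scaleR_diff_left algebra_simps)

lemma norm_diff_kproj_sq:
  assumes "a j \<noteq> 0" and "a j \<bullet> z = b j"
  shows "(norm (y - z))^2 = (norm (kproj a b j y - z))^2 + ((a j \<bullet> y - b j) / norm (a j))^2"
proof -
  define t where "t = (a j \<bullet> y - b j) / (norm (a j))^2"
  have step: "kproj a b j y - z = (y - z) - t *\<^sub>R a j"
    by (simp add: kproj_eq t_def)
  have "(norm (kproj a b j y - z))^2
      = (norm (y - z))^2 - 2 * t * (a j \<bullet> (y - z)) + t^2 * (norm (a j))^2"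
    unfolding step power2_norm_eq_inner
    by (simp add: inner_diff_left inner_diff_right inner_commute power2_eq_square algebra_simps)
  moreover have "a j \<bullet> (y - z) = t * (norm (a j))^2"
    using assms by (simp add: t_def inner_diff_right)
  ultimately have "(norm (kproj a b j y - z))^2 = (norm (y - z))^2 - t^2 * (norm (a j))^2"
    by (simp add: power2_eq_square)
  moreover have "((a j \<bullet> y - b j) / norm (a j))^2 = t^2 * (norm (a j))^2"
    using assms(1) by (simp add: t_def power_divide power2_eq_square field_simps)
  ultimately show ?thesis by simp
qed

lemma norm_diff_kcycle_sq:
  assumes "\<forall>j<m. a j \<noteq> 0" and "\<forall>j<m. a j \<bullet> z = b j" and "k \<le> m"
  shows "(norm (x - z))^2 = (norm (kcycle a b k x - z))^2 + kres_norm2 a b k x"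
  using \<open>k \<le> m\<close>
proof (induction k)
  case 0
  then show ?case by (simp add: kres_norm2_def)
next
  case (Suc k)
  then have "k < m" by simp
  then have "(norm (kcycle a b k x - z))^2
      = (norm (kcycle a b (Suc k) x - z))^2 + (kres a b k x)^2"
    using norm_diff_kproj_sq[of a k z b "kcycle a b k x"] assms(1,2) by (simp add: kres_def)
  with Suc show ?case by (simp add: kres_norm2_def)
qed

text \<open>The hypothesis pins down e\<bullet>d = -(R + |d|^2)/2; completing the square then yields the vertex form.\<close>

lemma norm_add_scaleR_sq_vertex:
  fixes e d :: "'a::real_inner"
  assumes "d \<noteq> 0" and "(norm e)^2 = (norm (e + d))^2 + R"
  shows "(norm (e + s *\<^sub>R d))^2
    = ((norm e)^2 - (R + (norm d)^2)^2 / (4 * (norm d)^2))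
      + (norm d)^2 * (s - (1/2 + R / (2 * (norm d)^2)))^2"
proof -
  define D where "D = (norm d)^2"
  have "D > 0" using assms(1) by (simp add: D_def)
  have expand: "\<And>s. (norm (e + s *\<^sub>R d))^2 = (norm e)^2 + 2 * s * (e \<bullet> d) + s^2 * D"
    unfolding D_def power2_norm_eq_inner
    by (simp add: inner_add_left inner_add_right inner_commute power2_eq_square algebra_simps)
  have "2 * (e \<bullet> d) = - (R + D)"
    using assms(2) expand[of 1] by simp
  then have "2 * s * (e \<bullet> d) = - s * (R + D)"
    by (metis mult.assoc mult.commute mult_minus_left)
  then have "(norm (e + s *\<^sub>R d))^2 = (norm e)^2 - s * (R + D) + s^2 * D"
    using expand[of s] by simp
  moreover have "1/2 + R / (2 * D) = (R + D) / (2 * D)"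
    using \<open>D > 0\<close> by (simp add: field_simps)
  moreover have "D * (s - (R + D) / (2 * D))^2 = D * s^2 - s * (R + D) + (R + D)^2 / (4 * D)"
    using \<open>D > 0\<close> by (simp add: field_simps power2_eq_square)
  ultimately show ?thesis
    unfolding D_def[symmetric] by simp
qed

lemma parabola_unique_argmin:
  fixes f :: "real \<Rightarrow> real"
  assumes "D > 0" and "\<And>s. f s = c + D * (s - s0)^2"
  shows "(\<forall>s. f s0 \<le> f s) \<and> (\<forall>s. (\<forall>t. f s \<le> f t) \<longrightarrow> s = s0)"
proof (intro conjI allI impI)
  fix s
  show "f s0 \<le> f s" using assms by simp
  assume "\<forall>t. f s \<le> f t"
  then have "f s \<le> f s0" by simp
  then have "D * (s - s0)^2 \<le> 0" using assms(2)[of s] assms(2)[of s0] by simp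
  with \<open>D > 0\<close> show "s = s0" by (simp add: mult_le_0_iff)
qed

theorem theorem4:
  fixes m :: nat and a :: "nat \<Rightarrow> real^'n" and b :: "nat \<Rightarrow> real"
    and xs x :: "real^'n"
  assumes rows_nz: "\<forall>j<m. a j \<noteq> 0"
    and sol: "\<forall>j<m. a j \<bullet> xs = b j"
    and notfix: "kcycle a b m x \<noteq> x"
  shows "let P = kcycle a b m;
             f = (\<lambda>s::real. (norm ((1 - s) *\<^sub>R x + s *\<^sub>R P x - xs))^2);
             sstar = 1/2 + kres_norm2 a b m x / (2 * (norm (P x - x))^2)
         in (\<forall>s. f sstar \<le> f s) \<and> (\<forall>s. (\<forall>t. f s \<le> f t) \<longrightarrow> s = sstar)
            \<and> (norm (x - xs))^2 - f sstar
                = (kres_norm2 a b m x + (norm (P x - x))^2)^2 / (4 * (norm (P x - x))^2)"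
proof -
  define e where "e = x - xs"
  define d where "d = kcycle a b m x - x"
  define f where "f = (\<lambda>s::real. (norm ((1 - s) *\<^sub>R x + s *\<^sub>R kcycle a b m x - xs))^2)"
  define sstar where "sstar = 1/2 + kres_norm2 a b m x / (2 * (norm d)^2)"
  define gain where "gain = (kres_norm2 a b m x + (norm d)^2)^2 / (4 * (norm d)^2)"
  have "d \<noteq> 0" using notfix by (simp add: d_def)
  have "(norm e)^2 = (norm (e + d))^2 + kres_norm2 a b m x"
    using norm_diff_kcycle_sq[OF rows_nz sol, of m x] by (simp add: e_def d_def)
  from norm_add_scaleR_sq_vertex[OF \<open>d \<noteq> 0\<close> this]
  have vertex: "\<And>s. f s = ((norm e)^2 - gain) + (norm d)^2 * (s - sstar)^2"
    by (simp add: f_def e_def d_def sstar_def gain_def algebra_simps)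
  have "(norm d)^2 > 0" using \<open>d \<noteq> 0\<close> by simp
  from parabola_unique_argmin[OF this vertex]
  have "(\<forall>s. f sstar \<le> f s) \<and> (\<forall>s. (\<forall>t. f s \<le> f t) \<longrightarrow> s = sstar)" .
  moreover have "(norm e)^2 - f sstar = gain" using vertex[of sstar] by simp
  ultimately show ?thesis
    by (simp add: Let_def f_def sstar_def gain_def d_def e_def)
qed

end
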